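(* Let $n\ge 3$, $J\subseteq\{1,\dots,n\}$ nonempty, $r_k>0$ for $k\in J$, $\mathcal X(J)=\bigcup_{k\in J}\frac{r_k}{\sqrt k}\mathcal I^n_k$, and $w$ a positive weight function constant (value $w_k$) on each $\frac{r_k}{\sqrt k}\mathcal I^n_k$. Then (1) $(\mathcal X(J),w)$ is at least a Euclidean $3$-design for any $J$, $R=\{r_k\}$ and $w$; and (2) there are no choices of $J$, $R$ and $w$ for which $(\mathcal X(J),w)$ is a Euclidean $9$-design.
   Context: $\mathcal I^n_k$ is the set of vectors in $\{-1,0,1\}^n$ with exactly $k$ nonzero entries. For finite $\mathcal X\subset\mathbb R^n\setminus\{0\}$ with positive weights $w$, $R=\{\|x\|\}$ and $W_r=\sum_{\|x\|=r}w(x)$, $(\mathcal X,w)$ is a Euclidean $t$-design if $\sum_{r\in R}W_r\overline f_{S^{n-1}_r}=\sum_{x\in\mathcal X}w(x)f(x)$ for all real polynomials $f$ of degree $\le t$, where $\overline f_{S^{n-1}_r}$ is the average of $f$ over the sphere of radius $r$ centered at the origin. *)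

theory Defs
  imports "HOL-Analysis.Analysis"
begin

definition monomial_fun :: "('n::finite \<Rightarrow> nat) \<Rightarrow> real^'n \<Rightarrow> real" where
  "monomial_fun \<alpha> x = (\<Prod>i\<in>UNIV. (x $ i) ^ (\<alpha> i))"

definition poly_fun_deg_le :: "nat \<Rightarrow> (real^'n::finite \<Rightarrow> real) \<Rightarrow> bool" where
  "poly_fun_deg_le t f \<longleftrightarrow>
     (\<exists>A c. finite A \<and> (\<forall>\<alpha>\<in>A. sum \<alpha> UNIV \<le> t) \<and>
            f = (\<lambda>x. \<Sum>\<alpha>\<in>A. c \<alpha> * monomial_fun \<alpha> x))"

text \<open>Average of f over the sphere of radius r centred at 0, w.r.t. the normalized
  rotation-invariant surface measure, realised as the cone measure:
  sigma(A) = vol{t x. x in A, 0 <= t <= 1} / vol(unit ball).\<close>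
definition sphere_avg :: "(real^'n::finite \<Rightarrow> real) \<Rightarrow> real \<Rightarrow> real" where
  "sphere_avg f r =
     integral (ball 0 1) (\<lambda>x. f (r *\<^sub>R (x /\<^sub>R norm x))) / measure lebesgue (ball (0::real^'n) 1)"

definition euclidean_design :: "nat \<Rightarrow> (real^'n::finite) set \<Rightarrow> (real^'n \<Rightarrow> real) \<Rightarrow> bool" where
  "euclidean_design t X w \<longleftrightarrow>
     finite X \<and> 0 \<notin> X \<and> (\<forall>x\<in>X. w x > 0) \<and>
     (\<forall>f. poly_fun_deg_le t f \<longrightarrow>
        (\<Sum>\<rho>\<in>norm ` X. (\<Sum>x\<in>{x\<in>X. norm x = \<rho>}. w x) * sphere_avg f \<rho>)
        = (\<Sum>x\<in>X. w x * f x))"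

definition I_set :: "nat \<Rightarrow> (real^'n::finite) set" where
  "I_set k = {x. (\<forall>i. x $ i \<in> {-1, 0, 1}) \<and> card {i. x $ i \<noteq> 0} = k}"

definition shell :: "(nat \<Rightarrow> real) \<Rightarrow> nat \<Rightarrow> (real^'n::finite) set" where
  "shell r k = (\<lambda>v. (r k / sqrt (real k)) *\<^sub>R v) ` I_set k"

definition X_J :: "nat set \<Rightarrow> (nat \<Rightarrow> real) \<Rightarrow> (real^'n::finite) set" where
  "X_J J r = (\<Union>k\<in>J. shell r k)"

end

(*
  X(J) is invariant under sign changes and transpositions of coordinates, w is constant
  on each shell, and these coordinate symmetries leave sphere averages unchanged.
  So the design identity holds for every monomial with an odd exponent (a reflection
  negates both sides), and by symmetry the even monomials of degree at most 3, namely 1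
  and x_i^2, reduce to the radial functions 1 and |x|^2, for which it holds radius by radius.

  For the upper bound take f = (x_a x_b (x_a^2 - x_b^2))^2 of degree 8: at a point whose
  coordinates lie in {-c, 0, c} either one of x_a, x_b vanishes or x_a^2 = x_b^2, so f
  vanishes on X(J), while f is non-negative and not identically zero on any sphere, so all
  its sphere averages are positive. Hence X(J) is not even an 8-design.
*)

theory Submission
  imports Defs
begin

section \<open>Coordinate symmetries\<close>

definition reflect_coord :: "'n::finite \<Rightarrow> real^'n \<Rightarrow> real^'n" where
  "reflect_coord i x = (\<chi> j. if j = i then - x $ j else x $ j)"

definition swap_coords :: "'n::finite \<Rightarrow> 'n \<Rightarrow> real^'n \<Rightarrow> real^'n" where
  "swap_coords i j x = (\<chi> k. x $ Transposition.transpose i j k)"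

text \<open>The box conditions are those of has_integral_twiddle; together with the isometry
  they make g preserve integrals over the unit ball.\<close>
definition box_symmetry :: "(real^'n::finite \<Rightarrow> real^'n) \<Rightarrow> bool" where
  "box_symmetry g \<longleftrightarrow> (\<forall>x. g (g x) = x) \<and> linear g \<and> (\<forall>x. norm (g x) = norm x) \<and>
     (\<forall>u v. \<exists>a b. g ` cbox u v = cbox a b) \<and>
     (\<forall>u v. Henstock_Kurzweil_Integration.content (g ` cbox u v)
        = Henstock_Kurzweil_Integration.content (cbox u v))"

lemma reflect_coord_involutory [simp]: "reflect_coord i (reflect_coord i x) = x"
  by (simp add: reflect_coord_def vec_eq_iff)

lemma swap_coords_involutory [simp]: "swap_coords i j (swap_coords i j x) = x"
  by (simp add: swap_coords_def vec_eq_iff)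

lemma linear_reflect_coord: "linear (reflect_coord i)"
  by (rule linearI) (auto simp: reflect_coord_def vec_eq_iff)

lemma linear_swap_coords: "linear (swap_coords i j)"
  by (rule linearI) (auto simp: swap_coords_def vec_eq_iff)

lemma image_involution_eq:
  assumes "\<And>x. g (g x) = x" and "\<And>x. x \<in> A \<longleftrightarrow> g x \<in> B"
  shows "g ` A = B"
  using assms by (metis image_eqI subsetI subset_antisym image_subset_iff)

lemma box_symmetryI:
  assumes "\<And>x. g (g x) = x" and "linear g" and "\<And>x. norm (g x) = norm x"
    and "\<And>u v. g ` cbox u v = cbox (a u v) (b u v)"
    and "\<And>u v. Henstock_Kurzweil_Integration.content (cbox (a u v) (b u v))
                = Henstock_Kurzweil_Integration.content (cbox u v)"
  shows "box_symmetry g"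
  using assms unfolding box_symmetry_def by auto

lemma box_symmetry_reflect_coord:
  fixes i :: "'n::finite"
  shows "box_symmetry (reflect_coord i)"
proof (rule box_symmetryI)
  show "reflect_coord i ` cbox u v =
      cbox (\<chi> j. if j = i then - v $ j else u $ j) (\<chi> j. if j = i then - u $ j else v $ j)" for u v :: "real^'n"
    by (rule image_involution_eq[OF reflect_coord_involutory]) (auto simp: mem_box_cart reflect_coord_def)
  show "Henstock_Kurzweil_Integration.content
      (cbox (\<chi> j. if j = i then - v $ j else u $ j) (\<chi> j. if j = i then - u $ j else v $ j))
      = Henstock_Kurzweil_Integration.content (cbox u v)" for u v :: "real^'n"
    unfolding content_cbox_if_cart
    by (auto simp: interval_eq_empty_cart(2) intro!: prod.cong split: if_splits)
  show "norm (reflect_coord i x) = norm x" for x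
    unfolding norm_eq_sqrt_inner inner_vec_def reflect_coord_def by (auto intro!: sum.cong)
qed (simp_all add: linear_reflect_coord)

lemma box_symmetry_swap_coords: "box_symmetry (swap_coords i j)"
proof (rule box_symmetryI)
  show "swap_coords i j ` cbox u v = cbox (swap_coords i j u) (swap_coords i j v)" for u v
    by (rule image_involution_eq[OF swap_coords_involutory])
      (auto simp: mem_box_cart swap_coords_def; metis transpose_involutory)
  show "Henstock_Kurzweil_Integration.content (cbox (swap_coords i j u) (swap_coords i j v))
      = Henstock_Kurzweil_Integration.content (cbox u v)" for u v
    unfolding content_cbox_if_cart interval_eq_empty_cart swap_coords_def
    by (simp add: prod.reindex_bij_betw[OF bij_transpose, of "\<lambda>k. v $ k - u $ k"])
       (metis transpose_involutory)
  show "norm (swap_coords i j x) = norm x" for x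
    unfolding norm_eq_sqrt_inner inner_vec_def swap_coords_def
    by (simp add: sum.reindex_bij_betw[OF bij_transpose, of "\<lambda>k. x $ k * x $ k"])
qed (simp_all add: linear_swap_coords)

lemma ball_subset_cbox_minus_one_one: "ball (0::real^'n::finite) 1 \<subseteq> cbox (-1) 1"
proof
  fix x :: "real^'n" assume "x \<in> ball 0 1"
  then have "\<bar>x $ i\<bar> < 1" for i using component_le_norm_cart[of x i] by simp
  then show "x \<in> cbox (-1) 1" by (auto simp: mem_box_cart abs_less_iff less_imp_le)
qed

lemma has_integral_ball_box_symmetry:
  fixes g :: "real^'n::finite \<Rightarrow> real^'n" and h :: "real^'n \<Rightarrow> real"
  assumes g: "box_symmetry g" and h: "(h has_integral I) (ball 0 1)"
  shows "((\<lambda>x. h (g x)) has_integral I) (ball 0 1)"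
proof -
  have inv: "\<And>x. g (g x) = x" and lin: "linear g" and isom: "\<And>x. norm (g x) = norm x"
    and box: "\<And>u v. \<exists>a b. g ` cbox u v = cbox a b"
    and content: "\<And>u v. Henstock_Kurzweil_Integration.content (g ` cbox u v)
        = Henstock_Kurzweil_Integration.content (cbox u v)"
    using g unfolding box_symmetry_def by blast+
  define F where "F x = (if x \<in> ball 0 1 then h x else 0)" for x
  have "(F has_integral I) (cbox (-1) 1)"
    unfolding F_def using h ball_subset_cbox_minus_one_one by (subst has_integral_restrict) auto
  \<comment> \<open>The change of variables works on boxes only, hence the extension by zero.\<close>
  then have "((\<lambda>x. F (g x)) has_integral (1 / 1) *\<^sub>R I) (g ` cbox (-1) 1)"
    using box content by (intro has_integral_twiddle[where h=g and g=g and r=1])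
       (auto simp: inv linear_continuous_at lin linear_conv_bounded_linear[symmetric])
  moreover have "F (g x) = (if x \<in> ball 0 1 then h (g x) else 0)" for x
    by (simp add: F_def isom)
  ultimately have "((\<lambda>x. if x \<in> ball 0 1 then h (g x) else 0) has_integral I) (g ` cbox (-1) 1)"
    by simp
  moreover have "ball 0 1 \<subseteq> g ` cbox (-1) 1"
  proof
    fix x :: "real^'n" assume "x \<in> ball 0 1"
    then have "g x \<in> cbox (-1) 1" using ball_subset_cbox_minus_one_one isom by auto
    then show "x \<in> g ` cbox (-1) 1" by (metis inv image_eqI)
  qed
  ultimately show ?thesis
    using has_integral_restrict by blast
qed

lemma integral_ball_box_symmetry:
  fixes g :: "real^'n::finite \<Rightarrow> real^'n" and h :: "real^'n \<Rightarrow> real"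
  assumes g: "box_symmetry g"
  shows "integral (ball 0 1) (\<lambda>x. h (g x)) = integral (ball 0 1) h"
proof (cases "h integrable_on ball 0 1")
  case True
  then show ?thesis
    using has_integral_ball_box_symmetry[OF g] by (meson has_integral_integrable_integral integral_unique)
next
  case False
  have "g (g x) = x" for x using g unfolding box_symmetry_def by blast
  then have "\<not> (\<lambda>x. h (g x)) integrable_on ball 0 1"
    using False has_integral_ball_box_symmetry[OF g, of "\<lambda>x. h (g x)"] unfolding integrable_on_def by auto
  then show ?thesis using False by (simp add: not_integrable_integral)
qed

lemma sphere_avg_box_symmetry:
  assumes g: "box_symmetry g"
  shows "sphere_avg (\<lambda>x. f (g x)) \<rho> = sphere_avg f \<rho>"
proof -
  have "linear g" and "\<And>x. norm (g x) = norm x" using g unfolding box_symmetry_def by blast+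
  then have "g (\<rho> *\<^sub>R (x /\<^sub>R norm x)) = \<rho> *\<^sub>R (g x /\<^sub>R norm (g x))" for x
    by (simp add: linear_scale)
  then show ?thesis
    unfolding sphere_avg_def
    using integral_ball_box_symmetry[OF g, of "\<lambda>y. f (\<rho> *\<^sub>R (y /\<^sub>R norm y))"] by simp
qed

section \<open>Sphere averages\<close>

lemma norm_scaleR_normalize: "x \<noteq> 0 \<Longrightarrow> norm (\<rho> *\<^sub>R (x /\<^sub>R norm x)) = \<bar>\<rho>\<bar>"
  by (simp add: abs_mult)

lemma measure_ball_pos: "measure lebesgue (ball (0::real^'n::finite) 1) > 0"
  using content_ball_pos[of 1 "0::real^'n"] by (simp add: measure_completion)

lemma sphere_integrand_integrable:
  fixes f :: "real^'n::finite \<Rightarrow> real"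
  assumes f: "continuous_on UNIV f"
  shows "(\<lambda>x. f (\<rho> *\<^sub>R (x /\<^sub>R norm x))) integrable_on ball 0 1"
proof -
  let ?S = "ball (0::real^'n) 1 - {0}"
  let ?G = "\<lambda>x. f (\<rho> *\<^sub>R (x /\<^sub>R norm x))"
  have S: "?S \<in> sets lebesgue"
    by (simp add: borel_open open_Diff sets_completionI_sets)
  have "compact (f ` cball 0 \<bar>\<rho>\<bar>)"
    by (rule compact_continuous_image) (auto intro: continuous_on_subset[OF f])
  then obtain M where M: "\<And>y. y \<in> f ` cball 0 \<bar>\<rho>\<bar> \<Longrightarrow> norm y \<le> M"
    using compact_imp_bounded bounded_iff by metis
  have "norm (\<rho> *\<^sub>R (x /\<^sub>R norm x)) \<le> \<bar>\<rho>\<bar>" for x :: "real^'n"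
    using norm_scaleR_normalize[of x \<rho>] by (cases "x = 0") simp_all
  then have bound: "norm (?G x) \<le> M" for x
    by (intro M) auto
  have "?G \<in> borel_measurable (lebesgue_on ?S)"
    by (intro continuous_imp_measurable_on_sets_lebesgue[OF _ S] continuous_on_compose2[OF f]
        continuous_intros) auto
  moreover have "(\<lambda>_. M) integrable_on ?S"
    by (intro integrable_on_const bounded_set_imp_lmeasurable) (auto simp: S intro: bounded_subset[of "ball 0 1"])
  ultimately have "?G absolutely_integrable_on ?S"
    using measurable_bounded_by_integrable_imp_absolutely_integrable S bound by blast
  then have "?G integrable_on ?S" using set_lebesgue_integral_eq_integral(1) by blast
  then show ?thesis
    by (rule integrable_spike_set) (auto intro: negligible_subset[of "{0}"])
qed

lemma sphere_avg_sum:
  fixes g :: "'a \<Rightarrow> real^'n::finite \<Rightarrow> real"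
  assumes "finite A" and "\<And>a. a \<in> A \<Longrightarrow> continuous_on UNIV (g a)"
  shows "sphere_avg (\<lambda>x. \<Sum>a\<in>A. c a * g a x) \<rho> = (\<Sum>a\<in>A. c a * sphere_avg (g a) \<rho>)"
proof -
  have "integral (ball 0 1) (\<lambda>x. \<Sum>a\<in>A. c a * g a (\<rho> *\<^sub>R (x /\<^sub>R norm x)))
      = (\<Sum>a\<in>A. integral (ball 0 1) (\<lambda>x. c a * g a (\<rho> *\<^sub>R (x /\<^sub>R norm x))))"
  proof (rule integral_sum[OF assms(1)])
    fix a assume "a \<in> A"
    then show "(\<lambda>x. c a * g a (\<rho> *\<^sub>R (x /\<^sub>R norm x))) integrable_on ball 0 1"
      by (intro integrable_on_mult_right sphere_integrand_integrable assms(2))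
  qed
  then show ?thesis
    unfolding sphere_avg_def by (simp add: sum_divide_distrib)
qed

lemma sphere_avg_uminus: "sphere_avg (\<lambda>x. - f x) \<rho> = - sphere_avg f \<rho>"
  unfolding sphere_avg_def by (simp add: integral_neg)

lemma sphere_avg_radial: "sphere_avg (\<lambda>x::real^'n::finite. \<phi> (norm x)) \<rho> = \<phi> \<bar>\<rho>\<bar>"
proof -
  have "integral (ball (0::real^'n) 1) (\<lambda>x. \<phi> (norm (\<rho> *\<^sub>R (x /\<^sub>R norm x))))
      = integral (ball (0::real^'n) 1) (\<lambda>x. \<phi> \<bar>\<rho>\<bar> * 1)"
  proof (rule integral_spike[of "{0}"])
    fix x :: "real^'n" assume "x \<in> ball 0 1 - {0}"
    then have "norm (\<rho> *\<^sub>R (x /\<^sub>R norm x)) = \<bar>\<rho>\<bar>" by (intro norm_scaleR_normalize) auto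
    then show "\<phi> \<bar>\<rho>\<bar> * 1 = \<phi> (norm (\<rho> *\<^sub>R (x /\<^sub>R norm x)))" by simp
  qed auto
  also have "\<dots> = \<phi> \<bar>\<rho>\<bar> * measure lebesgue (ball (0::real^'n) 1)"
    by (subst integral_mult_right, subst lmeasure_integral) (auto intro: bounded_set_imp_lmeasurable)
  finally show ?thesis
    unfolding sphere_avg_def using measure_ball_pos[where 'n='n] by simp
qed

definition design_defect :: "(real^'n::finite) set \<Rightarrow> (real^'n \<Rightarrow> real) \<Rightarrow> (real^'n \<Rightarrow> real) \<Rightarrow> real" where
  "design_defect X w f = (\<Sum>x\<in>X. w x * (sphere_avg f (norm x) - f x))"

lemma design_equation_iff_design_defect:
  assumes "finite X"
  shows "(\<Sum>\<rho>\<in>norm ` X. (\<Sum>x\<in>{x\<in>X. norm x = \<rho>}. w x) * sphere_avg f \<rho>) = (\<Sum>x\<in>X. w x * f x)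
     \<longleftrightarrow> design_defect X w f = 0"
proof -
  have "(\<Sum>\<rho>\<in>norm ` X. (\<Sum>x\<in>{x\<in>X. norm x = \<rho>}. w x) * sphere_avg f \<rho>)
      = (\<Sum>\<rho>\<in>norm ` X. \<Sum>x\<in>{x\<in>X. norm x = \<rho>}. w x * sphere_avg f (norm x))"
    by (intro sum.cong refl) (auto simp: sum_distrib_right)
  also have "\<dots> = (\<Sum>x\<in>X. w x * sphere_avg f (norm x))"
    using assms by (rule sum.image_gen[symmetric])
  finally show ?thesis
    unfolding design_defect_def by (simp add: right_diff_distrib sum_subtractf)
qed

lemma euclidean_design_iff_design_defect:
  "euclidean_design t X w \<longleftrightarrow> finite X \<and> 0 \<notin> X \<and> (\<forall>x\<in>X. w x > 0) \<and>
     (\<forall>f. poly_fun_deg_le t f \<longrightarrow> design_defect X w f = 0)"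
proof (cases "finite X")
  case True
  then show ?thesis
    unfolding euclidean_design_def by (simp add: design_equation_iff_design_defect)
qed (simp add: euclidean_design_def)

lemma design_defect_sum:
  fixes g :: "'a \<Rightarrow> real^'n::finite \<Rightarrow> real"
  assumes "finite A" and "\<And>a. a \<in> A \<Longrightarrow> continuous_on UNIV (g a)"
  shows "design_defect X w (\<lambda>x. \<Sum>a\<in>A. c a * g a x) = (\<Sum>a\<in>A. c a * design_defect X w (g a))"
proof -
  have "w x * (sphere_avg (\<lambda>x. \<Sum>a\<in>A. c a * g a x) (norm x) - (\<Sum>a\<in>A. c a * g a x))
      = (\<Sum>a\<in>A. c a * (w x * (sphere_avg (g a) (norm x) - g a x)))" for x
    using sphere_avg_sum[OF assms, where c=c and \<rho>="norm x"]
    by (simp add: right_diff_distrib sum_distrib_left sum_subtractf mult.left_commute)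
  then show ?thesis
    unfolding design_defect_def by (simp add: sum.swap[of _ X] sum_distrib_left)
qed

lemma design_defect_uminus: "design_defect X w (\<lambda>x. - f x) = - design_defect X w f"
  unfolding design_defect_def sphere_avg_uminus by (simp add: sum_negf[symmetric] algebra_simps)

lemma design_defect_radial: "design_defect X w (\<lambda>x. \<phi> (norm x)) = 0"
  unfolding design_defect_def sphere_avg_radial by simp

definition symmetric_under :: "(real^'n::finite \<Rightarrow> real^'n) \<Rightarrow> (real^'n) set \<Rightarrow> (real^'n \<Rightarrow> real) \<Rightarrow> bool" where
  "symmetric_under g X w \<longleftrightarrow> g ` X \<subseteq> X \<and> (\<forall>x\<in>X. w (g x) = w x)"

lemma design_defect_box_symmetry:
  assumes g: "box_symmetry g" and sym: "symmetric_under g X w"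
  shows "design_defect X w (\<lambda>x. f (g x)) = design_defect X w f"
proof -
  have inv: "\<And>x. g (g x) = x" using g unfolding box_symmetry_def by blast
  have wg: "\<And>x. x \<in> X \<Longrightarrow> w (g x) = w x" and gX: "g ` X \<subseteq> X"
    using sym unfolding symmetric_under_def by blast+
  have "bij_betw g X X"
  proof (rule bij_betw_imageI)
    show "inj_on g X" by (metis inj_onI inv)
    show "g ` X = X" using gX by (intro image_involution_eq[OF inv]) (metis image_subset_iff inv)
  qed
  then have "(\<Sum>x\<in>X. w (g x) * f (g x)) = (\<Sum>x\<in>X. w x * f x)"
    by (rule sum.reindex_bij_betw)
  then have "(\<Sum>x\<in>X. w x * f (g x)) = (\<Sum>x\<in>X. w x * f x)"
    using wg by simp
  then show ?thesis
    unfolding design_defect_def sphere_avg_box_symmetry[OF g]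
    by (simp add: right_diff_distrib sum_subtractf)
qed

section \<open>Polynomials of degree at most three\<close>

lemma continuous_on_monomial_fun: "continuous_on UNIV (monomial_fun \<alpha> :: real^'n::finite \<Rightarrow> real)"
  unfolding monomial_fun_def[abs_def] by (intro continuous_intros)

lemma monomial_fun_reflect_coord:
  "monomial_fun \<alpha> (reflect_coord i x) = (-1) ^ \<alpha> i * monomial_fun \<alpha> x"
proof -
  have "monomial_fun \<alpha> (reflect_coord i x) = (\<Prod>j\<in>UNIV. (if j = i then (-1) ^ \<alpha> j else 1) * (x $ j) ^ \<alpha> j)"
    unfolding monomial_fun_def
  proof (intro prod.cong refl)
    show "(reflect_coord i x $ j) ^ \<alpha> j = (if j = i then (-1) ^ \<alpha> j else 1) * (x $ j) ^ \<alpha> j" for j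
      by (cases "j = i") (simp_all add: reflect_coord_def power_minus[of "x $ i"])
  qed
  also have "\<dots> = (-1) ^ \<alpha> i * monomial_fun \<alpha> x"
    unfolding prod.distrib monomial_fun_def by (subst prod.delta) auto
  finally show ?thesis .
qed

lemma monomial_fun_single: "monomial_fun (\<lambda>j. if j = i then p else 0) = (\<lambda>x. (x $ i) ^ p)"
proof
  fix x :: "real^'a"
  have "monomial_fun (\<lambda>j. if j = i then p else 0) x = (\<Prod>j\<in>UNIV. if j = i then (x $ j) ^ p else 1)"
    unfolding monomial_fun_def by (intro prod.cong refl) simp
  also have "\<dots> = (x $ i) ^ p" by (subst prod.delta) auto
  finally show "monomial_fun (\<lambda>j. if j = i then p else 0) x = (x $ i) ^ p" .
qed

lemma design_defect_odd_monomial: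
  assumes "symmetric_under (reflect_coord i) X w" and "odd (\<alpha> i)"
  shows "design_defect X w (monomial_fun \<alpha>) = 0"
proof -
  have "design_defect X w (monomial_fun \<alpha>) = design_defect X w (\<lambda>x. monomial_fun \<alpha> (reflect_coord i x))"
    using design_defect_box_symmetry[OF box_symmetry_reflect_coord assms(1)] by simp
  also have "\<dots> = - design_defect X w (monomial_fun \<alpha>)"
    using assms(2) by (simp add: monomial_fun_reflect_coord design_defect_uminus)
  finally show ?thesis by simp
qed

lemma design_defect_coord_square:
  fixes X :: "(real^'n::finite) set"
  assumes "\<And>i j. symmetric_under (swap_coords i j) X w"
  shows "design_defect X w (\<lambda>x. (x $ i)^2) = 0"
proof -
  have same: "design_defect X w (\<lambda>x. (x $ j)^2) = design_defect X w (\<lambda>x. (x $ i)^2)" for j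
    using design_defect_box_symmetry[OF box_symmetry_swap_coords[of i j] assms[of i j],
        where f="\<lambda>x. (x $ i)^2"]
    by (simp only: swap_coords_def vec_lambda_beta transpose_apply_first)
  have "real CARD('n) * design_defect X w (\<lambda>x. (x $ i)^2)
      = (\<Sum>j\<in>UNIV. 1 * design_defect X w (\<lambda>x. (x $ j)^2))"
    by (simp add: sum.cong[OF refl same])
  also have "\<dots> = design_defect X w (\<lambda>x. \<Sum>j\<in>UNIV. 1 * (x $ j)^2)"
    by (rule design_defect_sum[symmetric]) (simp_all add: continuous_on_power continuous_on_component)
  also have "\<dots> = design_defect X w (\<lambda>x. norm x ^ 2)"
    unfolding power2_norm_eq_inner inner_vec_def by (simp add: power2_eq_square)
  also have "\<dots> = 0"
    by (rule design_defect_radial)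
  finally show ?thesis by simp
qed

lemma even_exponents_degree_le_3:
  fixes \<alpha> :: "'n::finite \<Rightarrow> nat"
  assumes even: "\<And>i. even (\<alpha> i)" and deg: "sum \<alpha> UNIV \<le> 3"
  shows "\<alpha> = (\<lambda>_. 0) \<or> (\<exists>i. \<alpha> = (\<lambda>j. if j = i then 2 else 0))"
proof (cases "\<alpha> = (\<lambda>_. 0)")
  case False
  then obtain i where i: "\<alpha> i \<noteq> 0" by auto
  have split: "sum \<alpha> UNIV = \<alpha> i + sum \<alpha> (UNIV - {i})"
    by (simp add: sum.remove)
  have "even (sum \<alpha> (UNIV - {i}))"
    by (intro dvd_sum) (simp add: even)
  moreover have "\<And>s t :: nat. even s \<Longrightarrow> even t \<Longrightarrow> s \<noteq> 0 \<Longrightarrow> s + t \<le> 3 \<Longrightarrow> s = 2 \<and> t = 0"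
    by presburger
  ultimately have "\<alpha> i = 2" and "sum \<alpha> (UNIV - {i}) = 0"
    using even[of i] i split deg by auto
  then have "\<alpha> = (\<lambda>j. if j = i then 2 else 0)" by (auto simp: fun_eq_iff)
  then show ?thesis by blast
qed simp

lemma design_defect_poly_deg_le_3:
  fixes X :: "(real^'n::finite) set"
  assumes refl: "\<And>i. symmetric_under (reflect_coord i) X w"
    and swap: "\<And>i j. symmetric_under (swap_coords i j) X w"
    and f: "poly_fun_deg_le 3 f"
  shows "design_defect X w f = 0"
proof -
  have monomial: "design_defect X w (monomial_fun \<alpha>) = 0" if deg: "sum \<alpha> UNIV \<le> 3" for \<alpha>
  proof (cases "\<exists>i. odd (\<alpha> i)")
    case True
    then show ?thesis using design_defect_odd_monomial refl by blast
  next
    case False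
    then consider "\<alpha> = (\<lambda>_. 0)" | i where "\<alpha> = (\<lambda>j. if j = i then 2 else 0)"
      using even_exponents_degree_le_3 deg by blast
    then show ?thesis
    proof cases
      case 1
      then have "monomial_fun \<alpha> = (\<lambda>x. 1)" by (simp add: monomial_fun_def[abs_def])
      then show ?thesis using design_defect_radial[of X w "\<lambda>_. 1"] by simp
    next
      case (2 i)
      then have "monomial_fun \<alpha> = (\<lambda>x. (x $ i)^2)"
        by (simp add: monomial_fun_single)
      then show ?thesis using design_defect_coord_square[OF swap] by simp
    qed
  qed
  obtain A c where "finite A" and "\<forall>\<alpha>\<in>A. sum \<alpha> UNIV \<le> 3"
    and "f = (\<lambda>x. \<Sum>\<alpha>\<in>A. c \<alpha> * monomial_fun \<alpha> x)"
    using f unfolding poly_fun_deg_le_def by blast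
  then show ?thesis
    by (simp add: design_defect_sum continuous_on_monomial_fun monomial)
qed

section \<open>The configuration X(J)\<close>

lemma finite_I_set: "finite (I_set k :: (real^'n::finite) set)"
proof -
  have "(I_set k :: (real^'n) set) \<subseteq> vec_lambda ` (UNIV \<rightarrow>\<^sub>E {-1, 0, 1})"
  proof
    fix v :: "real^'n" assume "v \<in> I_set k"
    then have "(\<lambda>i. v $ i) \<in> UNIV \<rightarrow>\<^sub>E {-1, 0, 1 :: real}" by (auto simp: I_set_def)
    then show "v \<in> vec_lambda ` (UNIV \<rightarrow>\<^sub>E {-1, 0, 1 :: real})" by (metis image_eqI vec_lambda_eta)
  qed
  then show ?thesis by (rule finite_subset) (simp add: finite_PiE)
qed

lemma I_set_reflect_coord: "v \<in> I_set k \<Longrightarrow> reflect_coord i v \<in> I_set k"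
proof -
  assume v: "v \<in> I_set k"
  have "{j. reflect_coord i v $ j \<noteq> 0} = {j. v $ j \<noteq> 0}" by (auto simp: reflect_coord_def)
  with v show ?thesis by (auto simp: I_set_def reflect_coord_def)
qed

lemma I_set_swap_coords: "v \<in> I_set k \<Longrightarrow> swap_coords i j v \<in> I_set k"
proof -
  assume v: "v \<in> I_set k"
  have "{l. swap_coords i j v $ l \<noteq> 0} = Transposition.transpose i j ` {l. v $ l \<noteq> 0}"
    by (rule image_involution_eq[symmetric]) (simp_all add: swap_coords_def)
  then have "card {l. swap_coords i j v $ l \<noteq> 0} = card {l. v $ l \<noteq> 0}"
    by (simp add: card_image)
  with v show ?thesis by (simp add: I_set_def swap_coords_def)
qed

lemma shell_linear_image:
  assumes "linear g" and "\<And>v. v \<in> I_set k \<Longrightarrow> g v \<in> I_set k" and "x \<in> shell r k"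
  shows "g x \<in> shell r k"
  using assms unfolding shell_def by (auto simp: linear_scale)

lemma reflect_coord_shell: "x \<in> shell r k \<Longrightarrow> reflect_coord i x \<in> shell r k"
  by (rule shell_linear_image[OF linear_reflect_coord I_set_reflect_coord])

lemma swap_coords_shell: "x \<in> shell r k \<Longrightarrow> swap_coords i j x \<in> shell r k"
  by (rule shell_linear_image[OF linear_swap_coords I_set_swap_coords])

lemma symmetric_under_X_J:
  assumes "\<And>k x. x \<in> shell r k \<Longrightarrow> g x \<in> shell r k"
    and "\<forall>k\<in>J. \<forall>x\<in>shell r k. w x = wk k"
  shows "symmetric_under g (X_J J r) w"
  using assms unfolding symmetric_under_def X_J_def by fastforce

lemma finite_X_J: "finite J \<Longrightarrow> finite (X_J J r :: (real^'n::finite) set)"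
  unfolding X_J_def shell_def by (simp add: finite_I_set)

lemma zero_notin_X_J:
  assumes "\<forall>k\<in>J. r k > 0" and "0 \<notin> J"
  shows "(0 :: real^'n::finite) \<notin> X_J J r"
proof
  assume "0 \<in> (X_J J r :: (real^'n) set)"
  then obtain k where k: "k \<in> J" and "0 \<in> (shell r k :: (real^'n) set)"
    unfolding X_J_def by blast
  then obtain v :: "real^'n" where v: "v \<in> I_set k" and "0 = (r k / sqrt (real k)) *\<^sub>R v"
    unfolding shell_def by blast
  moreover have "k \<noteq> 0" using k assms(2) by metis
  moreover have "r k / sqrt (real k) \<noteq> 0" using assms(1) k \<open>k \<noteq> 0\<close> by auto
  ultimately show False using v by (auto simp: I_set_def)
qed

lemma X_J_nonempty:
  assumes "k \<in> J" and "k \<le> CARD('n::finite)"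
  shows "(X_J J r :: (real^'n) set) \<noteq> {}"
proof -
  obtain T :: "'n set" where T: "card T = k"
    using assms(2) by (meson obtain_subset_with_card_n)
  define v :: "real^'n" where "v = (\<chi> i. if i \<in> T then 1 else 0)"
  have "{i. v $ i \<noteq> 0} = T" by (auto simp: v_def)
  then have "v \<in> I_set k" using T by (auto simp: I_set_def v_def)
  then show ?thesis
    using assms(1) unfolding X_J_def shell_def by blast
qed

section \<open>A polynomial of degree eight vanishing on X(J)\<close>

lemma poly_fun_deg_le_mono: "s \<le> t \<Longrightarrow> poly_fun_deg_le s f \<Longrightarrow> poly_fun_deg_le t f"
  unfolding poly_fun_deg_le_def by (blast intro: order_trans)

lemma poly_fun_deg_le_monomial: "sum \<alpha> UNIV \<le> t \<Longrightarrow> poly_fun_deg_le t (\<lambda>x. c * monomial_fun \<alpha> x)"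
  unfolding poly_fun_deg_le_def by (intro exI[of _ "{\<alpha>}"] exI[of _ "\<lambda>_. c"]) simp

lemma poly_fun_deg_le_add:
  assumes "poly_fun_deg_le t f" and "poly_fun_deg_le t g"
  shows "poly_fun_deg_le t (\<lambda>x. f x + g x)"
proof -
  obtain A a where A: "finite A" "\<forall>\<alpha>\<in>A. sum \<alpha> UNIV \<le> t"
    and f: "f = (\<lambda>x. \<Sum>\<alpha>\<in>A. a \<alpha> * monomial_fun \<alpha> x)"
    using assms(1) unfolding poly_fun_deg_le_def by blast
  obtain B b where B: "finite B" "\<forall>\<alpha>\<in>B. sum \<alpha> UNIV \<le> t"
    and g: "g = (\<lambda>x. \<Sum>\<alpha>\<in>B. b \<alpha> * monomial_fun \<alpha> x)"
    using assms(2) unfolding poly_fun_deg_le_def by blast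
  define c where "c \<alpha> = (if \<alpha> \<in> A then a \<alpha> else 0) + (if \<alpha> \<in> B then b \<alpha> else 0)" for \<alpha>
  have "(\<Sum>\<alpha>\<in>A \<union> B. c \<alpha> * monomial_fun \<alpha> x) = f x + g x" for x
  proof -
    have "(\<Sum>\<alpha>\<in>A \<union> B. (if \<alpha> \<in> A then a \<alpha> else 0) * monomial_fun \<alpha> x) = f x"
      unfolding f using A(1) B(1) by (intro sum.mono_neutral_cong_right) auto
    moreover have "(\<Sum>\<alpha>\<in>A \<union> B. (if \<alpha> \<in> B then b \<alpha> else 0) * monomial_fun \<alpha> x) = g x"
      unfolding g using A(1) B(1) by (intro sum.mono_neutral_cong_right) auto
    ultimately show ?thesis
      unfolding c_def by (simp add: distrib_right sum.distrib)
  qed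
  then show ?thesis
    unfolding poly_fun_deg_le_def using A B
    by (intro exI[of _ "A \<union> B"] exI[of _ c]) auto
qed

lemma euclidean_design_mono: "s \<le> t \<Longrightarrow> euclidean_design t X w \<Longrightarrow> euclidean_design s X w"
  unfolding euclidean_design_def using poly_fun_deg_le_mono by blast

lemma not_euclidean_design_if_vanishing_poly:
  assumes "poly_fun_deg_le t f" and "X \<noteq> {}" and "\<And>x. x \<in> X \<Longrightarrow> f x = 0"
    and "\<And>x. x \<in> X \<Longrightarrow> sphere_avg f (norm x) > 0"
  shows "\<not> euclidean_design t X w"
proof
  assume design: "euclidean_design t X w"
  then have "finite X" and "\<forall>x\<in>X. w x > 0" and "design_defect X w f = 0"
    using assms(1) unfolding euclidean_design_iff_design_defect by blast+
  moreover have "design_defect X w f = (\<Sum>x\<in>X. w x * sphere_avg f (norm x))"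
    unfolding design_defect_def using assms(3) by simp
  ultimately have "(\<Sum>x\<in>X. w x * sphere_avg f (norm x)) = 0" by simp
  moreover have "(\<Sum>x\<in>X. w x * sphere_avg f (norm x)) > 0"
    using \<open>finite X\<close> \<open>\<forall>x\<in>X. w x > 0\<close> assms(2,4) by (intro sum_pos) auto
  ultimately show False by simp
qed

lemma sphere_avg_pos:
  fixes f :: "real^'n::finite \<Rightarrow> real"
  assumes cont: "continuous_on UNIV f" and nonneg: "\<And>x. f x \<ge> 0"
    and "y \<noteq> 0" and pos: "f (\<rho> *\<^sub>R (y /\<^sub>R norm y)) > 0"
  shows "sphere_avg f \<rho> > 0"
proof -
  define G where "G x = f (\<rho> *\<^sub>R (x /\<^sub>R norm x))" for x :: "real^'n"
  define p where "p = y /\<^sub>R (2 * norm y)"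
  have "p \<noteq> 0" "norm p < 1" using \<open>y \<noteq> 0\<close> by (simp_all add: p_def)
  moreover have "p /\<^sub>R norm p = y /\<^sub>R norm y" using \<open>y \<noteq> 0\<close> by (simp add: p_def)
  ultimately have "G p > 0" using pos by (simp add: G_def)
  have contG: "continuous_on (- {0}) G"
    unfolding G_def by (intro continuous_on_compose2[OF cont] continuous_intros) auto
  have "open (ball 0 1 - {0})" "p \<in> ball 0 1 - {0}" using \<open>p \<noteq> 0\<close> \<open>norm p < 1\<close> by auto
  then obtain u v where box: "cbox u v \<subseteq> ball 0 1 - {0}" "p \<in> box u v"
    by (rule open_contains_cbox)
  have contG_box: "continuous_on (cbox u v) G"
    using box(1) by (intro continuous_on_subset[OF contG]) auto
  have G_nonneg: "G x \<ge> 0" for x by (simp add: G_def nonneg)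
  have G_integrable: "G integrable_on ball 0 1"
    unfolding G_def by (rule sphere_integrand_integrable[OF cont])
  have "p \<in> cbox u v" "box u v \<noteq> {}" using box(2) box_subset_cbox by blast+
  then have "integral (cbox u v) G \<noteq> 0"
    using \<open>G p > 0\<close> G_nonneg integral_cbox_eq_0_iff[OF contG_box] by fastforce
  moreover have "integral (cbox u v) G \<ge> 0"
    using contG_box G_nonneg by (intro integral_nonneg integrable_continuous) auto
  moreover have "integral (cbox u v) G \<le> integral (ball 0 1) G"
    using box(1) contG_box G_nonneg G_integrable
    by (intro integral_subset_le integrable_continuous) auto
  ultimately have "integral (ball 0 1) G > 0" by linarith
  then show ?thesis
    unfolding sphere_avg_def G_def[abs_def] using measure_ball_pos[where 'n='n] by simp
qed

lemma monomial_fun_pair: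
  assumes "a \<noteq> b"
  shows "monomial_fun (\<lambda>j. if j = a then p else if j = b then q else 0) x = (x $ a) ^ p * (x $ b) ^ q"
proof -
  have "monomial_fun (\<lambda>j. if j = a then p else if j = b then q else 0) x
      = (\<Prod>j\<in>UNIV. (if j = a then (x $ a) ^ p else 1) * (if j = b then (x $ b) ^ q else 1))"
    unfolding monomial_fun_def using assms by (intro prod.cong refl) auto
  also have "\<dots> = (x $ a) ^ p * (x $ b) ^ q" by (simp add: prod.distrib)
  finally show ?thesis .
qed

text \<open>Vanishes whenever both coordinates lie in {-c, 0, c}, but is positive on an open
  subset of every sphere.\<close>
definition octic_witness :: "'n::finite \<Rightarrow> 'n \<Rightarrow> real^'n \<Rightarrow> real" where
  "octic_witness a b x = (x $ a * x $ b * ((x $ a)^2 - (x $ b)^2))^2"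

lemma continuous_on_octic_witness: "continuous_on UNIV (octic_witness a b)"
  unfolding octic_witness_def[abs_def] by (intro continuous_intros)

lemma octic_witness_scaleR: "octic_witness a b (c *\<^sub>R x) = c ^ 8 * octic_witness a b x"
proof -
  have "(c * u * (c * v) * ((c * u)^2 - (c * v)^2))^2 = c ^ 8 * (u * v * (u^2 - v^2))^2" for u v :: real
    by algebra
  then show ?thesis unfolding octic_witness_def by simp
qed

lemma octic_witness_sign_vector:
  assumes "x $ a \<in> {-1, 0, 1}" and "x $ b \<in> {-1, 0, 1}"
  shows "octic_witness a b x = 0"
  using assms unfolding octic_witness_def by auto

lemma poly_fun_deg_le_octic_witness:
  assumes "a \<noteq> b"
  shows "poly_fun_deg_le 8 (octic_witness a b)"
proof -
  define e where "e p q = (\<lambda>j. if j = a then p else if j = b then q else (0::nat))" for p q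
  have deg: "sum (e p q) UNIV = p + q" for p q
  proof -
    have "sum (e p q) UNIV = (\<Sum>j\<in>UNIV. (if j = a then p else 0) + (if j = b then q else 0))"
      unfolding e_def using assms by (intro sum.cong refl) auto
    then show ?thesis by (simp add: sum.distrib)
  qed
  have expansion: "octic_witness a b = (\<lambda>x. 1 * monomial_fun (e 6 2) x +
      ((-2) * monomial_fun (e 4 4) x + 1 * monomial_fun (e 2 6) x))"
  proof -
    have "(u * v * (u^2 - v^2))^2 = 1 * (u^6 * v^2) + ((-2) * (u^4 * v^4) + 1 * (u^2 * v^6))" for u v :: real
      by algebra
    then show ?thesis
      unfolding octic_witness_def[abs_def] e_def monomial_fun_pair[OF assms] by simp
  qed
  show ?thesis
    unfolding expansion by (intro poly_fun_deg_le_add poly_fun_deg_le_monomial) (simp_all add: deg)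
qed

lemma sphere_avg_octic_witness_pos:
  assumes "a \<noteq> b" and "\<rho> \<noteq> 0"
  shows "sphere_avg (octic_witness a b) \<rho> > 0"
proof (rule sphere_avg_pos[OF continuous_on_octic_witness])
  define y :: "real^'a" where "y = (\<chi> j. if j = a then 2 else if j = b then 1 else 0)"
  show "y \<noteq> 0" using assms(1) by (auto simp: y_def vec_eq_iff)
  have "octic_witness a b y = 36" using assms(1) by (simp add: octic_witness_def y_def)
  then show "octic_witness a b (\<rho> *\<^sub>R (y /\<^sub>R norm y)) > 0"
    using assms(2) \<open>y \<noteq> 0\<close> by (simp add: octic_witness_scaleR scaleR_scaleR)
qed (simp add: octic_witness_def)

lemma octic_witness_X_J: "x \<in> X_J J r \<Longrightarrow> octic_witness a b x = 0"
  unfolding X_J_def shell_def I_set_def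
  by (auto simp: octic_witness_scaleR octic_witness_sign_vector)

lemma euclidean_design_3_X_J:
  assumes "finite J" and "0 \<notin> J" and "\<forall>k\<in>J. r k > 0" and "\<forall>k\<in>J. wk k > 0"
    and "\<forall>k\<in>J. \<forall>x\<in>shell r k. w x = wk k"
  shows "euclidean_design 3 (X_J J r :: (real^'n::finite) set) w"
proof -
  let ?X = "X_J J r :: (real^'n) set"
  have "symmetric_under (reflect_coord i) ?X w" "symmetric_under (swap_coords i j) ?X w" for i j
    using assms(5) by (auto intro: symmetric_under_X_J reflect_coord_shell swap_coords_shell)
  moreover have "finite ?X" and "0 \<notin> ?X" and "\<forall>x\<in>?X. w x > 0"
    using assms by (simp_all add: finite_X_J zero_notin_X_J) (auto simp: X_J_def)
  ultimately show ?thesis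
    by (simp add: euclidean_design_iff_design_defect design_defect_poly_deg_le_3)
qed

lemma not_euclidean_design_8_X_J:
  assumes "CARD('n::finite) \<ge> 2" and "J \<noteq> {}" and "J \<subseteq> {1..CARD('n)}" and "\<forall>k\<in>J. r k > 0"
  shows "\<not> euclidean_design 8 (X_J J r :: (real^'n) set) w"
proof -
  let ?X = "X_J J r :: (real^'n) set"
  obtain a b :: 'n where "a \<noteq> b"
    using assms(1) card_le_Suc0_iff_eq[of "UNIV :: 'n set"] by fastforce
  obtain k where "k \<in> J" using assms(2) by blast
  then have "?X \<noteq> {}" using assms(3) by (intro X_J_nonempty) auto
  moreover have "0 \<notin> ?X" using assms(3,4) by (intro zero_notin_X_J) auto
  ultimately show ?thesis using \<open>a \<noteq> b\<close>
    by (intro not_euclidean_design_if_vanishing_poly[OF poly_fun_deg_le_octic_witness])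
      (auto intro: octic_witness_X_J sphere_avg_octic_witness_pos)
qed

theorem proposition3p1:
  fixes J :: "nat set" and r :: "nat \<Rightarrow> real" and wk :: "nat \<Rightarrow> real"
    and w :: "real^'n::finite \<Rightarrow> real"
  assumes "CARD('n) \<ge> 3"
    and "J \<noteq> {}" and "J \<subseteq> {1..CARD('n)}"
    and "\<forall>k\<in>J. r k > 0"
    and "\<forall>k\<in>J. wk k > 0"
    and "\<forall>k\<in>J. \<forall>x\<in>shell r k. w x = wk k"
  shows "euclidean_design 3 (X_J J r) w \<and> \<not> euclidean_design 9 (X_J J r) w"
proof
  have "finite J" and "0 \<notin> J" using assms(3) finite_subset by auto
  then show "euclidean_design 3 (X_J J r) w"
    using assms(4-6) by (rule euclidean_design_3_X_J)
  have "\<not> euclidean_design 8 (X_J J r) w"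
    using assms(1-4) by (intro not_euclidean_design_8_X_J) auto
  then show "\<not> euclidean_design 9 (X_J J r) w"
    using euclidean_design_mono[of 8 9] by auto
qed

end
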